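(* Let $n$ be an even positive integer, $p$ a prime dividing $n$, and $p^a$ the largest power of $p$ dividing $n$. Suppose there is a prime $q$ with $q<n/2$ and $n-2q<p^a$. If there is a multiple $k$ of $p^a$ in the interval $[q,n/2]$, then $p$ is odd and $k=n/2$. *)

theory Defs
  imports "HOL-Computational_Algebra.Primes"
begin

end

theory Submission
  imports Defs
begin

text \<open>Write \<open>P = p ^ multiplicity p n\<close>. Since \<open>P\<close> divides both \<open>n\<close> and \<open>2k\<close>, it divides
  \<open>n - 2k \<le> n - 2q < P\<close>, so \<open>n = 2k\<close>. If \<open>p = 2\<close>, then \<open>P\<close> dividing \<open>k = n / 2\<close> would
  mean that \<open>n\<close> is divisible by a higher power of \<open>p\<close> than its multiplicity allows.\<close>

lemma eq_if_dvd_diff_less: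
  fixes a b d :: nat
  assumes "d dvd a" and "d dvd b" and "b \<le> a" and "a - b < d"
  shows "a = b"
proof -
  have "d dvd a - b" using assms(1,2) by (rule dvd_diff_nat)
  with \<open>a - b < d\<close> have "a - b = 0" using dvd_imp_le by fastforce
  with \<open>b \<le> a\<close> show ?thesis by simp
qed

lemma not_multiplicity_power_dvd_quotient:
  fixes p k :: nat
  assumes "prime p" and "k \<noteq> 0"
  shows "\<not> p ^ multiplicity p (p * k) dvd k"
proof
  assume "p ^ multiplicity p (p * k) dvd k"
  hence "multiplicity p (p * k) \<le> multiplicity p k"
    using assms by (subst (asm) power_dvd_iff_le_multiplicity) (auto dest: prime_gt_1_nat)
  moreover have "multiplicity p (p * k) = Suc (multiplicity p k)"
    using assms by (intro multiplicity_times_same) (auto dest: prime_gt_1_nat)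
  ultimately show False by simp
qed

theorem mainTheorem19:
  fixes n p q k :: nat
  assumes "even n" and "n > 0"
    and "prime p" and "p dvd n"
    and "prime q" and "2 * q < n" and "n - 2 * q < p ^ multiplicity p n"
    and "p ^ multiplicity p n dvd k"
    and "q \<le> k" and "2 * k \<le> n"
  shows "odd p \<and> 2 * k = n"
proof -
  have "n - 2 * k < p ^ multiplicity p n" using assms(7,9) by linarith
  hence double_k: "2 * k = n"
    using assms(8,10) by (intro eq_if_dvd_diff_less[symmetric]) (simp_all add: multiplicity_dvd)
  have "odd p"
  proof
    assume "even p"
    have "p \<le> 2" using prime_odd_nat[OF \<open>prime p\<close>] \<open>even p\<close> by (meson not_less)
    with prime_ge_2_nat[OF \<open>prime p\<close>] have "p = 2" by simp
    with double_k assms(8) have "p ^ multiplicity p (p * k) dvd k" by simp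
    moreover have "k \<noteq> 0" using double_k \<open>n > 0\<close> by simp
    ultimately show False using not_multiplicity_power_dvd_quotient \<open>prime p\<close> by blast
  qed
  with double_k show ?thesis by simp
qed

end
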